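(* Let $G$ be a directed graph on vertex set $V$ with $|V|=n$, and let $E^+\subseteq V\times V$ be a set of at most $f$ edges. Let $H$ be the graph on $V$ whose edge set consists of the following edges: (1) for each strongly connected component $S$ of $G$, the edges of a directed cycle on the vertices of $S$; (2) for each $uv\in E^+$ and each $w\in V$, an edge $vw$ if $v$ can reach $w$ in $G\cup E^+$, and an edge $wv$ if $w$ can reach $v$ in $G\cup E^+$. (Then $H$ has $O(nf)$ edges.) Then for all $u,v\in V$, $u$ and $v$ are strongly connected in $G\cup E^+$ if and only if they are strongly connected in $H$.
   Context: Two vertices are strongly connected if each can reach the other; strongly connected components are the equivalence classes of this relation. *)

theory Defs
  imports Main
begin

definition strongly_connected :: "('a \<times> 'a) set \<Rightarrow> 'a \<Rightarrow> 'a \<Rightarrow> bool" where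
  "strongly_connected E u v \<longleftrightarrow> (u, v) \<in> E\<^sup>* \<and> (v, u) \<in> E\<^sup>*"

definition sccs :: "'a set \<Rightarrow> ('a \<times> 'a) set \<Rightarrow> 'a set set" where
  "sccs V E = (\<lambda>v. {w \<in> V. strongly_connected E v w}) ` V"

text \<open>C is the edge set of a directed cycle through all vertices of S
  (visiting each exactly once): consecutive pairs of a cyclic enumeration of S.
  For a singleton S this is a single self-loop.\<close>
definition is_cycle_on :: "'a set \<Rightarrow> ('a \<times> 'a) set \<Rightarrow> bool" where
  "is_cycle_on S C \<longleftrightarrow> (\<exists>xs. distinct xs \<and> set xs = S \<and>
      C = {(xs ! i, xs ! ((i + 1) mod length xs)) | i. i < length xs})"

definition extra_edges :: "'a set \<Rightarrow> ('a \<times> 'a) set \<Rightarrow> ('a \<times> 'a) set \<Rightarrow> ('a \<times> 'a) set" where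
  "extra_edges V E Eplus =
     {(v, w) | u v w. (u, v) \<in> Eplus \<and> w \<in> V \<and> (v, w) \<in> (E \<union> Eplus)\<^sup>*} \<union>
     {(w, v) | u v w. (u, v) \<in> Eplus \<and> w \<in> V \<and> (w, v) \<in> (E \<union> Eplus)\<^sup>*}"

end

theory Submission
  imports Defs
begin

text \<open>Soundness is immediate: every edge of H is realised by a walk of G = E \<union> Eplus.
  For completeness, let u and v be strongly connected in G. If the closed walk
  through u and v avoids Eplus, they lie in one strongly connected component of E and the
  cycle on it connects them. Otherwise the walk passes through the head b of an extra
  edge, so u reaches b and b reaches v, and (u, b), (b, v) are type-(2) edges of H.\<close>

lemma strongly_connected_sym:
  "strongly_connected E u v \<Longrightarrow> strongly_connected E v u"
  unfolding strongly_connected_def by blast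

lemma strongly_connected_subset_rtrancl:
  assumes "H \<subseteq> G\<^sup>*" and "strongly_connected H u v"
  shows "strongly_connected G u v"
  using assms rtrancl_subset_rtrancl unfolding strongly_connected_def by blast

lemma rtrancl_Un_cases:
  assumes "(x, y) \<in> (E \<union> F)\<^sup>*"
  obtains "(x, y) \<in> E\<^sup>*"
    | a b where "(a, b) \<in> F" "(x, a) \<in> (E \<union> F)\<^sup>*" "(b, y) \<in> (E \<union> F)\<^sup>*"
  using assms
proof (induction arbitrary: thesis rule: rtrancl_induct)
  case base
  then show ?case by simp
next
  case (step y z)
  show ?case
  proof (cases "(y, z) \<in> F")
    case True
    then show ?thesis using step.hyps(1) step.prems(2) by blast
  next
    case False
    then have "(y, z) \<in> E" using step.hyps(2) by blast
    show ?thesis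
    proof (rule step.IH)
      show "(x, y) \<in> E\<^sup>* \<Longrightarrow> thesis"
        using \<open>(y, z) \<in> E\<close> step.prems(1) by (meson rtrancl_into_rtrancl)
      show "(a, b) \<in> F \<Longrightarrow> (x, a) \<in> (E \<union> F)\<^sup>* \<Longrightarrow> (b, y) \<in> (E \<union> F)\<^sup>* \<Longrightarrow> thesis" for a b
        using step.hyps(2) step.prems(2) by (meson rtrancl_into_rtrancl)
    qed
  qed
qed

lemma strongly_connected_Un_cases:
  assumes "strongly_connected (E \<union> F) x y"
  obtains "strongly_connected E x y"
    | a b where "(a, b) \<in> F" "(x, b) \<in> (E \<union> F)\<^sup>*" "(b, y) \<in> (E \<union> F)\<^sup>*"
proof -
  let ?G = "E \<union> F"
  have xy: "(x, y) \<in> ?G\<^sup>*" and yx: "(y, x) \<in> ?G\<^sup>*"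
    using assms unfolding strongly_connected_def by auto
  have F_in: "(a, b) \<in> F \<Longrightarrow> (a, b) \<in> ?G\<^sup>*" for a b by blast
  show thesis
  proof (cases rule: rtrancl_Un_cases[OF xy])
    case E_xy: 1
    show thesis
    proof (cases rule: rtrancl_Un_cases[OF yx])
      case 1
      with E_xy show thesis using that(1) unfolding strongly_connected_def by blast
    next
      case (2 a b)
      then show thesis
        using that(2) xy F_in by (meson rtrancl_trans)
    qed
  next
    case (2 a b)
    then show thesis
      using that(2) F_in by (meson rtrancl_trans)
  qed
qed

lemma sccs_subset_rtrancl:
  assumes "S \<in> sccs V E"
  shows "S \<times> S \<subseteq> E\<^sup>*"
proof -
  obtain x where "S = {w \<in> V. strongly_connected E x w}"
    using assms unfolding sccs_def by blast
  then show ?thesis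
    unfolding strongly_connected_def by (blast intro: rtrancl_trans)
qed

lemma strongly_connected_in_sccs:
  assumes "x \<in> V" "y \<in> V" "strongly_connected E x y"
  obtains S where "S \<in> sccs V E" "x \<in> S" "y \<in> S"
proof
  show "{w \<in> V. strongly_connected E x w} \<in> sccs V E"
    using assms(1) unfolding sccs_def by blast
qed (use assms in \<open>auto simp: strongly_connected_def\<close>)

lemma is_cycle_on_subset:
  assumes "is_cycle_on S C"
  shows "C \<subseteq> S \<times> S"
proof -
  obtain xs where "set xs = S"
    and C: "C = {(xs ! i, xs ! ((i + 1) mod length xs)) | i. i < length xs}"
    using assms unfolding is_cycle_on_def by blast
  show ?thesis
  proof
    fix p assume "p \<in> C"
    then obtain i where i: "i < length xs" "p = (xs ! i, xs ! ((i + 1) mod length xs))"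
      unfolding C by blast
    then have "(i + 1) mod length xs < length xs"
      by (metis mod_less_divisor gr_implies_not0 gr0I)
    then show "p \<in> S \<times> S"
      using i \<open>set xs = S\<close> nth_mem by blast
  qed
qed

lemma is_cycle_on_rtrancl:
  assumes "is_cycle_on S C" "x \<in> S" "y \<in> S"
  shows "(x, y) \<in> C\<^sup>*"
proof -
  obtain xs where "set xs = S"
    and C: "C = {(xs ! i, xs ! ((i + 1) mod length xs)) | i. i < length xs}"
    using assms(1) unfolding is_cycle_on_def by blast
  let ?l = "length xs"
  obtain i j where ij: "i < ?l" "x = xs ! i" "j < ?l" "y = xs ! j"
    using assms(2,3) \<open>set xs = S\<close> by (metis in_set_conv_nth)
  have walk: "(xs ! i, xs ! ((i + k) mod ?l)) \<in> C\<^sup>*" for k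
  proof (induction k)
    case 0
    then show ?case using ij by simp
  next
    case (Suc k)
    have "(i + k) mod ?l < ?l" using ij(1) by (metis mod_less_divisor gr_implies_not0 gr0I)
    then have "(xs ! ((i + k) mod ?l), xs ! (((i + k) mod ?l + 1) mod ?l)) \<in> C"
      unfolding C by blast
    then show ?case using Suc by (simp add: mod_Suc_eq rtrancl_into_rtrancl)
  qed
  have "(i + (j + ?l - i)) mod ?l = j" using ij by simp
  then show ?thesis using walk[of "j + ?l - i"] ij by simp
qed

lemma extra_edges_subset_rtrancl: "extra_edges V E F \<subseteq> (E \<union> F)\<^sup>*"
  unfolding extra_edges_def by blast

lemma extra_edges_through_head:
  assumes "(a, b) \<in> F" "x \<in> V" "y \<in> V"
    and "(x, b) \<in> (E \<union> F)\<^sup>*" "(b, y) \<in> (E \<union> F)\<^sup>*"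
  shows "(x, y) \<in> (extra_edges V E F)\<^sup>*"
proof -
  have "(x, b) \<in> extra_edges V E F" "(b, y) \<in> extra_edges V E F"
    unfolding extra_edges_def using assms by blast+
  then show ?thesis by (meson converse_rtrancl_into_rtrancl r_into_rtrancl)
qed

lemma strongly_connected_Un_imp_rtrancl:
  assumes "\<forall>S \<in> sccs V E. is_cycle_on S (cyc S) \<and> cyc S \<subseteq> H"
    and "extra_edges V E F \<subseteq> H"
    and "x \<in> V" "y \<in> V" "strongly_connected (E \<union> F) x y"
  shows "(x, y) \<in> H\<^sup>*"
  using assms(5)
proof (cases rule: strongly_connected_Un_cases)
  case 1
  obtain S where S: "S \<in> sccs V E" "x \<in> S" "y \<in> S"
    by (rule strongly_connected_in_sccs[OF assms(3,4) 1])
  then have "(x, y) \<in> (cyc S)\<^sup>*"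
    using assms(1) is_cycle_on_rtrancl[of S "cyc S" x y] by blast
  moreover have "cyc S \<subseteq> H" using assms(1) S(1) by blast
  ultimately show ?thesis by (meson rtrancl_mono subsetD)
next
  case (2 a b)
  then have "(x, y) \<in> (extra_edges V E F)\<^sup>*"
    using assms(3,4) by (intro extra_edges_through_head)
  then show ?thesis using assms(2) by (meson rtrancl_mono subsetD)
qed

theorem lemma9:
  fixes V :: "'a set" and E Eplus H :: "('a \<times> 'a) set" and n f :: nat
    and cyc :: "'a set \<Rightarrow> ('a \<times> 'a) set"
  assumes "finite V" and "card V = n"
    and "E \<subseteq> V \<times> V"
    and "Eplus \<subseteq> V \<times> V" and "card Eplus \<le> f"
    and "\<forall>S \<in> sccs V E. is_cycle_on S (cyc S)"
    and "H = (\<Union>S \<in> sccs V E. cyc S) \<union> extra_edges V E Eplus"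
  shows "\<forall>u \<in> V. \<forall>v \<in> V.
           strongly_connected (E \<union> Eplus) u v \<longleftrightarrow> strongly_connected H u v"
proof -
  \<comment> \<open>The finiteness and cardinality hypotheses only matter for the size bound on H.\<close>
  let ?G = "E \<union> Eplus"
  have "cyc S \<subseteq> E\<^sup>*" if "S \<in> sccs V E" for S
    using that assms(6) is_cycle_on_subset sccs_subset_rtrancl[OF that] by blast
  moreover have "E\<^sup>* \<subseteq> ?G\<^sup>*" by (rule rtrancl_mono) blast
  ultimately have "H \<subseteq> ?G\<^sup>*"
    unfolding assms(7) using extra_edges_subset_rtrancl[of V E Eplus] by blast
  then have sound: "strongly_connected H u v \<Longrightarrow> strongly_connected ?G u v" for u v
    by (rule strongly_connected_subset_rtrancl)
  have "\<forall>S \<in> sccs V E. is_cycle_on S (cyc S) \<and> cyc S \<subseteq> H"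
    using assms(6,7) by blast
  moreover have "extra_edges V E Eplus \<subseteq> H" using assms(7) by blast
  ultimately have complete: "strongly_connected ?G x y \<Longrightarrow> (x, y) \<in> H\<^sup>*"
    if "x \<in> V" "y \<in> V" for x y
    using that by (intro strongly_connected_Un_imp_rtrancl)
  show ?thesis
  proof (intro ballI iffI)
    fix u v assume "u \<in> V" "v \<in> V" "strongly_connected ?G u v"
    then show "strongly_connected H u v"
      using complete strongly_connected_sym unfolding strongly_connected_def by meson
  qed (rule sound)
qed

end
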